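(* Let $\langle E,\rightarrow\rangle$ be a computation and $b$ a regular predicate. The graph $S_b(E)$ has the same set of consistent cuts as the slice of $\langle E,\rightarrow\rangle$ with respect to $b$.
   Context: A computation is a directed graph $\langle E, \rightarrow\rangle$ whose vertices (events) are partitioned among processes $p_1,\dots,p_n$; events on each process are totally ordered, each process $p_i$ has an initial event $\bot_i$ (first) and final event $\top_i$ (last), the path relation contains Lamport's happened-before relation, all initial events lie in one strongly connected component and all final events in one strongly connected component. $\top$ is the set of final events and $\mathrm{succ}(e)$ the successor of $e$ on its process. A subset $C$ of the vertices of a directed graph is a consistent cut if for every edge $(u,v)$, $v\in C$ implies $u\in C$; $\emptyset,E$ are trivial. A predicate (evaluated on non-trivial consistent cuts) is regular if whenever consistent cuts $C_1,C_2$ satisfy it, so do $C_1\cap C_2$ and $C_1\cup C_2$. $J_b(e)$ is the least consistent cut of $\langle E,\rightarrow\rangle$ that satisfies $b$ and contains $e$, or $E$ if none exists or $e\in\top$. $F_b(e)[i]$ is the earliest event $g$ on $p_i$ with $J_b(e)\subseteq J_b(g)$. $S_b(E)$ has vertex set $E$ and edges from each $e\notin\top$ to $\mathrm{succ}(e)$ and from each $e$ to $F_b(e)[i]$ for every $i$. The slice of $\langle E,\rightarrow\rangle$ with respect to $b$ is a directed graph on $E$ whose consistent cuts include every consistent cut of $\langle E,\rightarrow\rangle$ satisfying $b$ and which has the fewest consistent cuts among all such graphs. *)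

theory Defs
  imports Main
begin

text \<open>A computation on processes p_0..p_(n-1): process i has the list of events ev i
  (first element = initial event, last element = final event); E is the event set and
  R the edge relation of the directed graph.\<close>

definition events :: "nat \<Rightarrow> (nat \<Rightarrow> 'e list) \<Rightarrow> 'e set" where
  "events n ev = (\<Union>i<n. set (ev i))"

definition bot_events :: "nat \<Rightarrow> (nat \<Rightarrow> 'e list) \<Rightarrow> 'e set" where
  "bot_events n ev = {hd (ev i) | i. i < n}"

definition top_events :: "nat \<Rightarrow> (nat \<Rightarrow> 'e list) \<Rightarrow> 'e set" where
  "top_events n ev = {last (ev i) | i. i < n}"

definition computation :: "nat \<Rightarrow> (nat \<Rightarrow> 'e list) \<Rightarrow> ('e \<times> 'e) set \<Rightarrow> bool" where
  "computation n ev R \<longleftrightarrow>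
     n \<ge> 1 \<and>
     (\<forall>i<n. distinct (ev i) \<and> length (ev i) \<ge> 2) \<and>
     (\<forall>i<n. \<forall>j<n. i \<noteq> j \<longrightarrow> set (ev i) \<inter> set (ev j) = {}) \<and>
     R \<subseteq> events n ev \<times> events n ev \<and>
     (\<forall>i<n. \<forall>j k. j < k \<and> k < length (ev i) \<longrightarrow> (ev i ! j, ev i ! k) \<in> R\<^sup>*) \<and>
     (\<forall>i<n. \<forall>j<n. (hd (ev i), hd (ev j)) \<in> R\<^sup>*) \<and>
     (\<forall>i<n. \<forall>j<n. (last (ev i), last (ev j)) \<in> R\<^sup>*)"

definition consistent_cut :: "'e set \<Rightarrow> ('e \<times> 'e) set \<Rightarrow> 'e set \<Rightarrow> bool" where
  "consistent_cut V G C \<longleftrightarrow> C \<subseteq> V \<and> (\<forall>u v. (u, v) \<in> G \<longrightarrow> v \<in> C \<longrightarrow> u \<in> C)"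

text \<open>A cut satisfies predicate b: it is a non-trivial consistent cut of the computation
  on which b holds (predicates are only evaluated on non-trivial consistent cuts).\<close>
definition satisfies :: "'e set \<Rightarrow> ('e \<times> 'e) set \<Rightarrow> ('e set \<Rightarrow> bool) \<Rightarrow> 'e set \<Rightarrow> bool" where
  "satisfies E R b C \<longleftrightarrow> consistent_cut E R C \<and> C \<noteq> {} \<and> C \<noteq> E \<and> b C"

definition regular :: "'e set \<Rightarrow> ('e \<times> 'e) set \<Rightarrow> ('e set \<Rightarrow> bool) \<Rightarrow> bool" where
  "regular E R b \<longleftrightarrow> (\<forall>C1 C2. satisfies E R b C1 \<and> satisfies E R b C2 \<longrightarrow>
      satisfies E R b (C1 \<inter> C2) \<and> satisfies E R b (C1 \<union> C2))"

definition J :: "nat \<Rightarrow> (nat \<Rightarrow> 'e list) \<Rightarrow> ('e \<times> 'e) set \<Rightarrow> ('e set \<Rightarrow> bool) \<Rightarrow> 'e \<Rightarrow> 'e set" where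
  "J n ev R b e =
     (if e \<in> top_events n ev \<or> \<not> (\<exists>C. satisfies (events n ev) R b C \<and> e \<in> C)
      then events n ev
      else (THE C. satisfies (events n ev) R b C \<and> e \<in> C \<and>
                 (\<forall>D. satisfies (events n ev) R b D \<and> e \<in> D \<longrightarrow> C \<subseteq> D)))"

definition F :: "nat \<Rightarrow> (nat \<Rightarrow> 'e list) \<Rightarrow> ('e \<times> 'e) set \<Rightarrow> ('e set \<Rightarrow> bool) \<Rightarrow> 'e \<Rightarrow> nat \<Rightarrow> 'e" where
  "F n ev R b e i =
     ev i ! (LEAST k. k < length (ev i) \<and> J n ev R b e \<subseteq> J n ev R b (ev i ! k))"

definition S_edges :: "nat \<Rightarrow> (nat \<Rightarrow> 'e list) \<Rightarrow> ('e \<times> 'e) set \<Rightarrow> ('e set \<Rightarrow> bool) \<Rightarrow> ('e \<times> 'e) set" where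
  "S_edges n ev R b =
     {(ev i ! k, ev i ! Suc k) | i k. i < n \<and> Suc k < length (ev i)} \<union>
     {(e, F n ev R b e i) | e i. e \<in> events n ev \<and> i < n}"

definition is_slice :: "'e set \<Rightarrow> ('e \<times> 'e) set \<Rightarrow> ('e set \<Rightarrow> bool) \<Rightarrow> ('e \<times> 'e) set \<Rightarrow> bool" where
  "is_slice E R b G \<longleftrightarrow>
     G \<subseteq> E \<times> E \<and> (\<forall>C. satisfies E R b C \<longrightarrow> consistent_cut E G C) \<and>
     (\<forall>G'. G' \<subseteq> E \<times> E \<and> (\<forall>C. satisfies E R b C \<longrightarrow> consistent_cut E G' C) \<longrightarrow>
        card {C. consistent_cut E G C} \<le> card {C. consistent_cut E G' C})"

end

theory Submission
  imports Defs
begin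

text \<open>Regularity makes the satisfying cuts closed under finite intersections and unions.
  Hence J_b(e) is the least satisfying cut containing e (or E), and e' \<in> J_b(e) implies
  J_b(e') \<subseteq> J_b(e). A satisfying cut C is a consistent cut of S_b(E): if F_b(e)[i] \<in> C then
  e \<in> J_b(e) \<subseteq> J_b(F_b(e)[i]) \<subseteq> C. Conversely, let C be a consistent cut of S_b(E) and f \<in> C
  an event of p_i. For e \<in> J_b(f), minimality of F_b(e)[i] places it at or before f, so e \<in> C.
  Thus C is the union of the cuts J_b(f), f \<in> C, which are satisfying unless C = E.
  So the consistent cuts of S_b(E) are the satisfying cuts and the two trivial ones. A slice
  has at least these cuts and, by minimality, at most as many, so by finiteness exactly these.\<close>

lemma consistent_cut_empty: "consistent_cut V G {}"
  unfolding consistent_cut_def by simp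

lemma consistent_cut_whole: "G \<subseteq> V \<times> V \<Longrightarrow> consistent_cut V G V"
  unfolding consistent_cut_def by auto

lemma finite_consistent_cuts: "finite V \<Longrightarrow> finite {C. consistent_cut V G C}"
  by (rule finite_subset[of _ "Pow V"]) (auto simp: consistent_cut_def)

lemma consistent_cut_rtrancl_closed:
  assumes "consistent_cut V G C" "(u, v) \<in> G\<^sup>*" "v \<in> C"
  shows "u \<in> C"
  using assms(2,3)
proof (induction rule: converse_rtrancl_induct)
  case (step y z)
  then show ?case using assms(1) unfolding consistent_cut_def by blast
qed

lemma satisfies_consistent_cut: "satisfies E R b C \<Longrightarrow> consistent_cut E R C"
  unfolding satisfies_def by simp

lemma satisfies_subset: "satisfies E R b C \<Longrightarrow> C \<subseteq> E"
  unfolding satisfies_def consistent_cut_def by simp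

lemma regular_satisfies_Inter:
  assumes "regular E R b" "finite A" "A \<noteq> {}" "\<forall>C\<in>A. satisfies E R b C"
  shows "satisfies E R b (\<Inter>A)"
  using assms(2-4)
proof (induction A rule: finite_ne_induct)
  case (insert C A)
  then show ?case using assms(1) unfolding regular_def by auto
qed simp

lemma regular_satisfies_Union:
  assumes "regular E R b" "finite A" "A \<noteq> {}" "\<forall>C\<in>A. satisfies E R b C"
  shows "satisfies E R b (\<Union>A)"
  using assms(2-4)
proof (induction A rule: finite_ne_induct)
  case (insert C A)
  then show ?case using assms(1) unfolding regular_def by auto
qed simp

lemma is_slice_consistent_cuts_eq:
  assumes "finite E" "is_slice E R b G" "H \<subseteq> E \<times> E"
    and cuts_H: "{C. consistent_cut E H C} = {C. satisfies E R b C} \<union> {{}, E}"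
  shows "{C. consistent_cut E G C} = {C. consistent_cut E H C}"
proof -
  have H_cuts: "consistent_cut E H C" if "satisfies E R b C" for C
  proof -
    have "C \<in> {C. consistent_cut E H C}"
      unfolding cuts_H using that by simp
    then show ?thesis by simp
  qed
  have G_edges: "G \<subseteq> E \<times> E"
    and G_cuts: "\<And>C. satisfies E R b C \<Longrightarrow> consistent_cut E G C"
    and G_fewest: "card {C. consistent_cut E G C} \<le> card {C. consistent_cut E H C}"
    using assms(2,3) H_cuts unfolding is_slice_def by blast+
  have "{C. consistent_cut E H C} \<subseteq> {C. consistent_cut E G C}"
    using cuts_H G_cuts consistent_cut_empty consistent_cut_whole[OF G_edges] by auto
  from card_seteq[OF finite_consistent_cuts[OF assms(1)] this G_fewest] show ?thesis
    by (rule sym)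
qed

lemma nth_in_events: "i < n \<Longrightarrow> k < length (ev i) \<Longrightarrow> ev i ! k \<in> events n ev"
  unfolding events_def using nth_mem by blast

lemma in_eventsE:
  assumes "e \<in> events n ev"
  obtains i k where "i < n" "k < length (ev i)" "e = ev i ! k"
  using assms unfolding events_def by (auto simp: in_set_conv_nth)

locale regular_computation =
  fixes n :: nat and ev :: "nat \<Rightarrow> 'e list" and R :: "('e \<times> 'e) set"
    and b :: "'e set \<Rightarrow> bool"
  assumes computation: "computation n ev R" and regular: "regular (events n ev) R b"
begin

abbreviation "Ev \<equiv> events n ev"
abbreviation "sat \<equiv> satisfies Ev R b"
abbreviation "Jb \<equiv> J n ev R b"
abbreviation "Fb \<equiv> F n ev R b"
abbreviation "Sb \<equiv> S_edges n ev R b"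

lemma finite_events: "finite Ev"
  unfolding events_def by simp

lemma length_process: "i < n \<Longrightarrow> 2 \<le> length (ev i)"
  using computation unfolding computation_def by simp

lemma last_process_conv_nth: "i < n \<Longrightarrow> last (ev i) = ev i ! (length (ev i) - 1)"
  using length_process[of i] by (intro last_conv_nth) auto

lemma process_order_rtrancl:
  assumes "i < n" "j \<le> k" "k < length (ev i)"
  shows "(ev i ! j, ev i ! k) \<in> R\<^sup>*"
  using assms computation unfolding computation_def by (cases "j = k") auto

lemma final_events_rtrancl: "i < n \<Longrightarrow> j < n \<Longrightarrow> (last (ev i), last (ev j)) \<in> R\<^sup>*"
  using computation unfolding computation_def by simp

lemma rtrancl_to_final:
  assumes "e \<in> Ev" "i < n"
  shows "(e, last (ev i)) \<in> R\<^sup>*"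
proof -
  obtain j k where jk: "j < n" "k < length (ev j)" "e = ev j ! k"
    using assms(1) by (rule in_eventsE)
  have "(e, last (ev j)) \<in> R\<^sup>*"
    using process_order_rtrancl[of j k "length (ev j) - 1"] jk last_process_conv_nth by simp
  also have "(last (ev j), last (ev i)) \<in> R\<^sup>*"
    using final_events_rtrancl jk(1) assms(2) .
  finally show ?thesis .
qed

lemma satisfies_final_notin:
  assumes "sat C" "t \<in> top_events n ev"
  shows "t \<notin> C"
proof
  assume "t \<in> C"
  obtain i where "i < n" "t = last (ev i)"
    using assms(2) unfolding top_events_def by blast
  have cut: "consistent_cut Ev R C"
    using assms(1) by (rule satisfies_consistent_cut)
  have "Ev \<subseteq> C"
  proof
    fix e assume "e \<in> Ev"
    with \<open>i < n\<close> \<open>t = last (ev i)\<close> have "(e, t) \<in> R\<^sup>*"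
      by (simp add: rtrancl_to_final)
    from cut this \<open>t \<in> C\<close> show "e \<in> C"
      by (rule consistent_cut_rtrancl_closed)
  qed
  moreover have "C \<subseteq> Ev" "C \<noteq> Ev"
    using assms(1) unfolding satisfies_def consistent_cut_def by simp_all
  ultimately show False
    by simp
qed

lemma J_least:
  assumes "sat D" "e \<in> D"
  shows "sat (Jb e)" "e \<in> Jb e" "Jb e \<subseteq> D"
proof -
  let ?Cs = "{C. sat C \<and> e \<in> C}"
  have "finite ?Cs"
    using finite_events by (auto intro: finite_subset[of _ "Pow Ev"] dest: satisfies_subset)
  then have sat_Inter: "sat (\<Inter>?Cs)"
    using regular_satisfies_Inter[OF regular] assms by blast
  have "e \<notin> top_events n ev"
    using satisfies_final_notin assms by blast
  then have "Jb e = (THE C. sat C \<and> e \<in> C \<and> (\<forall>D. sat D \<and> e \<in> D \<longrightarrow> C \<subseteq> D))"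
    unfolding J_def using assms by auto
  also have "\<dots> = \<Inter>?Cs"
    using sat_Inter by (intro the_equality) auto
  finally show "sat (Jb e)" "e \<in> Jb e" "Jb e \<subseteq> D"
    using sat_Inter assms by auto
qed

lemma J_no_satisfying: "\<nexists>D. sat D \<and> e \<in> D \<Longrightarrow> Jb e = Ev"
  unfolding J_def by simp

lemma J_cases:
  obtains "sat (Jb e)" "e \<in> Jb e" | "Jb e = Ev"
  using J_least(1,2) J_no_satisfying by metis

lemma J_subset_events: "Jb e \<subseteq> Ev"
  by (cases e rule: J_cases) (simp_all add: satisfies_subset)

lemma J_self: "e \<in> Ev \<Longrightarrow> e \<in> Jb e"
  by (cases e rule: J_cases) simp_all

lemma J_final: "i < n \<Longrightarrow> Jb (last (ev i)) = Ev"
  unfolding J_def top_events_def by auto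

lemma J_mono:
  assumes "e \<in> Jb f"
  shows "Jb e \<subseteq> Jb f"
proof (cases f rule: J_cases)
  case 1
  then show ?thesis
    using J_least(3) assms by blast
next
  case 2
  then show ?thesis
    using J_subset_events by simp
qed

lemma F_least:
  assumes "i < n"
  obtains m where "Fb e i = ev i ! m" "m < length (ev i)" "Jb e \<subseteq> Jb (ev i ! m)"
    "\<And>k. k < length (ev i) \<Longrightarrow> Jb e \<subseteq> Jb (ev i ! k) \<Longrightarrow> m \<le> k"
proof -
  let ?P = "\<lambda>k. k < length (ev i) \<and> Jb e \<subseteq> Jb (ev i ! k)"
  have "length (ev i) - 1 < length (ev i)"
    using length_process[OF assms] by simp
  moreover have "Jb (ev i ! (length (ev i) - 1)) = Ev"
    using J_final[OF assms] last_process_conv_nth[OF assms] by simp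
  ultimately have "?P (length (ev i) - 1)"
    using J_subset_events by simp
  then have "?P (LEAST k. ?P k)"
    by (rule LeastI)
  moreover have "\<And>k. ?P k \<Longrightarrow> (LEAST k. ?P k) \<le> k"
    by (rule Least_le)
  ultimately show ?thesis
    using that unfolding F_def by blast
qed

lemma S_edges_cases:
  assumes "(u, v) \<in> Sb"
  obtains (succ) i k where "i < n" "Suc k < length (ev i)" "u = ev i ! k" "v = ev i ! Suc k"
    | (F) i where "u \<in> Ev" "i < n" "v = Fb u i"
  using assms unfolding S_edges_def by blast

lemma S_edges_subset: "Sb \<subseteq> Ev \<times> Ev"
proof (clarify)
  fix u v assume "(u, v) \<in> Sb"
  then show "u \<in> Ev \<and> v \<in> Ev"
  proof (cases rule: S_edges_cases)
    case (succ i k)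
    then show ?thesis
      by (simp add: nth_in_events)
  next
    case (F i)
    then show ?thesis
      by (metis F_least nth_in_events)
  qed
qed

lemma consistent_cut_S_process_prefix:
  assumes "consistent_cut Ev Sb C" "i < n"
  shows "k < length (ev i) \<Longrightarrow> ev i ! k \<in> C \<Longrightarrow> m \<le> k \<Longrightarrow> ev i ! m \<in> C"
proof (induction k)
  case (Suc k)
  have "(ev i ! k, ev i ! Suc k) \<in> Sb"
    using Suc.prems assms(2) unfolding S_edges_def by blast
  then have "ev i ! k \<in> C"
    using assms(1) Suc.prems unfolding consistent_cut_def by blast
  then show ?case
    using Suc by (cases "m = Suc k") auto
qed simp

lemma satisfies_consistent_cut_S:
  assumes "sat C"
  shows "consistent_cut Ev Sb C"
  unfolding consistent_cut_def
proof (intro conjI allI impI)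
  show "C \<subseteq> Ev"
    using assms by (rule satisfies_subset)
  fix u v assume "(u, v) \<in> Sb" "v \<in> C"
  then show "u \<in> C"
  proof (cases rule: S_edges_cases)
    case (succ i k)
    then have "(u, v) \<in> R\<^sup>*"
      using process_order_rtrancl[of i k "Suc k"] by simp
    with satisfies_consistent_cut[OF assms] show ?thesis
      using \<open>v \<in> C\<close> by (rule consistent_cut_rtrancl_closed)
  next
    case (F i)
    then obtain m where "v = ev i ! m" "Jb u \<subseteq> Jb (ev i ! m)"
      using F_least by metis
    then show ?thesis
      using J_least(3)[OF assms \<open>v \<in> C\<close>] J_self[OF \<open>u \<in> Ev\<close>] by blast
  qed
qed

lemma consistent_cut_S_J_subset:
  assumes cut: "consistent_cut Ev Sb C" and "f \<in> C"
  shows "Jb f \<subseteq> C"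
proof
  fix e assume "e \<in> Jb f"
  obtain i k where f: "i < n" "k < length (ev i)" "f = ev i ! k"
    using assms unfolding consistent_cut_def by (meson in_eventsE subsetD)
  obtain m where m: "Fb e i = ev i ! m"
    "\<And>k. k < length (ev i) \<Longrightarrow> Jb e \<subseteq> Jb (ev i ! k) \<Longrightarrow> m \<le> k"
    using F_least[OF f(1)] by metis
  have "m \<le> k"
    using m(2)[OF f(2)] J_mono[OF \<open>e \<in> Jb f\<close>] f(3) by blast
  then have "Fb e i \<in> C"
    using consistent_cut_S_process_prefix[OF cut f(1,2)] \<open>f \<in> C\<close> f(3) m(1) by simp
  moreover have "(e, Fb e i) \<in> Sb"
    using \<open>e \<in> Jb f\<close> J_subset_events f(1) unfolding S_edges_def by blast
  ultimately show "e \<in> C"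
    using cut unfolding consistent_cut_def by blast
qed

lemma consistent_cut_S_satisfies:
  assumes cut: "consistent_cut Ev Sb C" and "C \<noteq> {}" "C \<noteq> Ev"
  shows "sat C"
proof -
  have C_events: "C \<subseteq> Ev"
    using cut unfolding consistent_cut_def by simp
  have C_eq: "C = \<Union>(Jb ` C)"
    using consistent_cut_S_J_subset[OF cut] J_self C_events by blast
  have "sat (Jb f)" if "f \<in> C" for f
  proof (cases f rule: J_cases)
    case 2
    then show ?thesis
      using consistent_cut_S_J_subset[OF cut that] C_events \<open>C \<noteq> Ev\<close> by simp
  qed
  moreover have "finite C"
    using C_events finite_events finite_subset by blast
  ultimately have "sat (\<Union>(Jb ` C))"
    using regular_satisfies_Union[OF regular] \<open>C \<noteq> {}\<close> by blast
  with C_eq show ?thesis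
    by simp
qed

lemma consistent_cuts_S: "{C. consistent_cut Ev Sb C} = {C. sat C} \<union> {{}, Ev}"
  using satisfies_consistent_cut_S consistent_cut_S_satisfies consistent_cut_empty
    consistent_cut_whole[OF S_edges_subset] by blast

end

theorem theorem9:
  fixes n :: nat and ev :: "nat \<Rightarrow> 'e list" and R :: "('e \<times> 'e) set"
    and b :: "'e set \<Rightarrow> bool" and G :: "('e \<times> 'e) set"
  assumes "computation n ev R"
    and "regular (events n ev) R b"
    and "is_slice (events n ev) R b G"
  shows "{C. consistent_cut (events n ev) (S_edges n ev R b) C} = {C. consistent_cut (events n ev) G C}"
proof -
  interpret regular_computation n ev R b
    using assms(1,2) by unfold_locales
  show ?thesis
    using is_slice_consistent_cuts_eq[OF finite_events assms(3) S_edges_subset consistent_cuts_S]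
    by (rule sym)
qed

end
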